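(* Let $n>0$ be the degree of freedom and $\eta_0$ a real constant. Let $k,\mu$ be nonzero constants with the same sign. Consider the isenthalpic van der Waals pressure $$p(\rho)=\frac{3\rho\,(n\rho^2+(6-3n)\rho+2\eta_0)}{6+3n-n\rho},\qquad 0<\rho<3,$$ and put $$Q'(\rho)=\frac{k}{\mu}\rho\,p'(\rho)=\frac{6k\rho}{\mu(6+3n-\rho n)^2}\Big(3\eta_0(n+2)+\rho(6-3n)(6+3n)+6n(n+1)\rho^2-n^2\rho^3\Big).$$ Let $C_1\neq0$ and $C_2$ be real constants, let $J\subset(0,3)$ be an open interval on which $C_1\rho+C_2\neq0$, and let $G$ be an antiderivative of $\frac{Q'(\rho)}{C_1(C_1\rho+C_2)}$ on $J$. If $$\eta_0>\frac{2(n-2)^2(2n+5)}{3n(n+2)},$$ then $G$ is invertible on $J$.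
   Context: The van der Waals gas (in reduced units) has state equations $p=\frac{8T}{3v-1}-\frac{3}{v^2}$ and $e=\frac{4n}{3}T-\frac{3}{v}$, where $v=\rho^{-1}>1/3$ is the specific volume (so $0<\rho<3$), $T$ is the temperature, $e$ is the specific energy and $n$ is the degree of freedom. An isenthalpic process is one with specific enthalpy $\eta=e+p\rho^{-1}$ equal to the constant $\eta_0$; along it, $p$ as a function of $\rho$ is given by the displayed formula. The permeability $k$ and viscosity $\mu$ are constants. *)

theory Defs
  imports "HOL-Analysis.Analysis"
begin

definition vdw_p :: "real \<Rightarrow> real \<Rightarrow> real \<Rightarrow> real" where
  "vdw_p n eta0 rho = 3 * rho * (n * rho^2 + (6 - 3*n) * rho + 2 * eta0) / (6 + 3*n - n * rho)"

definition vdw_Qd :: "real \<Rightarrow> real \<Rightarrow> real \<Rightarrow> real \<Rightarrow> real \<Rightarrow> real" where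
  "vdw_Qd n eta0 k mu rho = k / mu * rho * deriv (vdw_p n eta0) rho"

end

theory Submission
  imports Defs
begin

text \<open>The derivative of G has no zero on J: it is a nonzero multiple of p'(rho), whose numerator,
  multiplied by n and written in x = n rho, is
  3n(n+2) eta0 - 2(n-2)^2(2n+5) - (x-n+2)^2 (x-4n-10).
  The lower bound on eta0 makes the constant part positive, and (x-n+2)^2 (x-4n-10) \<le> 0
  as long as x < 4n+10, in particular for rho < 3. By the mean value theorem G is then injective.\<close>

lemma inj_on_nonzero_derivative:
  fixes f f' :: "real \<Rightarrow> real"
  assumes "connected S"
    and "\<And>x. x \<in> S \<Longrightarrow> (f has_real_derivative f' x) (at x)"
    and "\<And>x. x \<in> S \<Longrightarrow> f' x \<noteq> 0"
  shows "inj_on f S"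
proof (rule linorder_inj_onI')
  fix i j assume "i \<in> S" "j \<in> S" "i < j"
  then have Icc: "{i..j} \<subseteq> S"
    using connected_contains_Icc[OF assms(1)] by blast
  obtain z where z: "i < z" "z < j" "f j - f i = (j - i) * f' z"
    using MVT2[OF \<open>i < j\<close>, of f f'] Icc assms(2) by force
  then have "z \<in> S"
    using Icc by (meson atLeastAtMost_iff less_imp_le subsetD)
  then have "f' z \<noteq> 0"
    using assms(3) by blast
  with z \<open>i < j\<close> show "f i \<noteq> f j"
    by auto
qed

definition vdw_dp_numerator :: "real \<Rightarrow> real \<Rightarrow> real \<Rightarrow> real" where
  "vdw_dp_numerator n eta0 rho =
     3*eta0*(n+2) + rho*(6-3*n)*(6+3*n) + 6*n*(n+1)*rho^2 - n^2*rho^3"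

lemma has_real_derivative_vdw_p:
  assumes "6 + 3*n - n*rho \<noteq> 0"
  shows "(vdw_p n eta0 has_real_derivative
           6 * vdw_dp_numerator n eta0 rho / (6 + 3*n - n*rho)^2) (at rho)"
proof -
  have "vdw_p n eta0 = (\<lambda>r. 3 * r * (n * r^2 + (6 - 3*n) * r + 2 * eta0) / (6 + 3*n - n * r))"
    by (simp add: vdw_p_def fun_eq_iff)
  then show ?thesis
    unfolding vdw_dp_numerator_def
    apply (simp only:)
    apply (rule derivative_eq_intros refl)+
    using assms apply (simp add: divide_simps)
    apply (simp add: algebra_simps power2_eq_square power3_eq_cube)
    done
qed

lemma vdw_dp_numerator_eq:
  "n * vdw_dp_numerator n eta0 rho =
     3*n*(n+2)*eta0 - 2*(n-2)^2*(2*n+5) - (n*rho - n + 2)^2 * (n*rho - 4*n - 10)"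
  by (simp add: vdw_dp_numerator_def algebra_simps power2_eq_square power3_eq_cube)

lemma vdw_dp_numerator_pos:
  assumes "n > 0" and "n * rho < 4*n + 10"
    and "eta0 > 2 * (n - 2)^2 * (2*n + 5) / (3 * n * (n + 2))"
  shows "vdw_dp_numerator n eta0 rho > 0"
proof -
  have "2 * (n - 2)^2 * (2*n + 5) < eta0 * (3 * n * (n + 2))"
    using assms(1,3) by (simp add: pos_divide_less_eq)
  moreover have "(n*rho - n + 2)^2 * (n*rho - 4*n - 10) \<le> 0"
    using assms(2) by (simp add: mult_nonneg_nonpos)
  ultimately have "n * vdw_dp_numerator n eta0 rho > 0"
    unfolding vdw_dp_numerator_eq by (simp add: algebra_simps)
  with assms(1) show ?thesis
    by (simp add: zero_less_mult_iff)
qed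

lemma vdw_Qd_nonzero:
  assumes "n > 0" and "k \<noteq> 0" and "mu \<noteq> 0" and "0 < rho" and "rho < 3"
    and "eta0 > 2 * (n - 2)^2 * (2*n + 5) / (3 * n * (n + 2))"
  shows "vdw_Qd n eta0 k mu rho \<noteq> 0"
proof -
  have "n * rho < n * 3"
    using assms(1,5) by simp
  then have denom_pos: "6 + 3*n - n*rho > 0"
    by linarith
  have "deriv (vdw_p n eta0) rho = 6 * vdw_dp_numerator n eta0 rho / (6 + 3*n - n*rho)^2"
    using has_real_derivative_vdw_p denom_pos by (intro DERIV_imp_deriv) auto
  moreover have "vdw_dp_numerator n eta0 rho > 0"
    using \<open>n * rho < n * 3\<close> assms(1) by (intro vdw_dp_numerator_pos assms(6)) linarith+
  ultimately show ?thesis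
    using assms(2-4) denom_pos by (simp add: vdw_Qd_def)
qed

theorem mainTheorem3:
  fixes n eta0 k mu C1 C2 a b :: real and G :: "real \<Rightarrow> real"
  assumes "n > 0"
    and "k \<noteq> 0" and "mu \<noteq> 0" and "k * mu > 0"
    and "C1 \<noteq> 0"
    and "0 \<le> a" and "a < b" and "b \<le> 3"
    and "\<forall>rho \<in> {a<..<b}. C1 * rho + C2 \<noteq> 0"
    and "\<forall>rho \<in> {a<..<b}.
           (G has_real_derivative (vdw_Qd n eta0 k mu rho / (C1 * (C1 * rho + C2)))) (at rho)"
    and "eta0 > 2 * (n - 2)^2 * (2*n + 5) / (3 * n * (n + 2))"
  shows "inj_on G {a<..<b}"
proof (rule inj_on_nonzero_derivative)
  show "connected {a<..<b}"
    by simp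
  show "(G has_real_derivative vdw_Qd n eta0 k mu rho / (C1 * (C1 * rho + C2))) (at rho)"
    if "rho \<in> {a<..<b}" for rho
    using assms(10) that by blast
  show "vdw_Qd n eta0 k mu rho / (C1 * (C1 * rho + C2)) \<noteq> 0" if "rho \<in> {a<..<b}" for rho
    using vdw_Qd_nonzero[OF assms(1-3) _ _ assms(11)] assms(5,6,8,9) that by auto
qed

end
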